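(* Let $V$ be a Hausdorff, sequentially complete locally convex space whose topology is induced by a family $\mathcal P$ of seminorms, let $\Omega\subset\mathbb R^m$ be open and $k\in(0,\infty)\setminus\mathbb N$. A function $f\colon\Omega\to V$ belongs to $C^k(\Omega,V)$ if and only if for each $p\in\mathcal P$ there is $C\in(0,\infty)$ such that for every continuous linear form $l\in V'$ one has $l\circ f\in C^k(\Omega,\mathbb R)$ and $|l\circ f|_k\le C\,p^*(l)$.
   Context: $V'$ denotes the space of continuous linear forms $V\to\mathbb R$; for $l\in V'$, $p\in\mathcal P$, $p^*(l)=\sup\{l(v)\colon v\in V,\ p(v)\le1\}\le\infty$. For $k\in(0,\infty)\setminus\mathbb N$ write $[k]$ for its integer part and $\{k\}=k-[k]$. A function $f\colon\Omega\to V$ is in $C^k(\Omega,V)$ if it is bounded, has partial derivatives of all orders $\le[k]$, and every such partial $g=\partial^\alpha f$, $|\alpha|\le[k]$, satisfies $\tilde p_{\{k\}}(g)=\sup\{p(g(s)-g(t))/|s-t|^{\{k\}}\colon s,t\in\Omega,\ s\ne t\}<\infty$ for all $p\in\mathcal P$. For $p\in\mathcal P$ put $p_k(f)=\max\{\sup_\Omega p(f),\ \tilde p_{\{k\}}(\partial^\alpha f)\colon|\alpha|\le[k]\}$; when $V=\mathbb R$, $p=|\cdot|$, this is written $|\cdot|_k$ (the usual Hölder norm). *)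

theory Defs
  imports "HOL-Analysis.Analysis"
begin

definition seminorm :: "('v::real_vector \<Rightarrow> real) \<Rightarrow> bool" where
  "seminorm p \<longleftrightarrow> (\<forall>x y. p (x + y) \<le> p x + p y) \<and> (\<forall>c x. p (c *\<^sub>R x) = \<bar>c\<bar> * p x)"

definition seminorm_topology :: "('v::real_vector \<Rightarrow> real) set \<Rightarrow> 'v topology" where
  "seminorm_topology P = topology (\<lambda>U. \<forall>x\<in>U. \<exists>F r. finite F \<and> F \<subseteq> P \<and> r > 0 \<and>
      {y. \<forall>p\<in>F. p (y - x) < r} \<subseteq> U)"

definition seq_complete :: "('v::real_vector \<Rightarrow> real) set \<Rightarrow> bool" where
  "seq_complete P \<longleftrightarrow> (\<forall>x :: nat \<Rightarrow> 'v.
     (\<forall>p\<in>P. \<forall>e>0. \<exists>N. \<forall>m\<ge>N. \<forall>n\<ge>N. p (x m - x n) < e) \<longrightarrow>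
     (\<exists>y. limitin (seminorm_topology P) x y sequentially))"

definition cont_linear_form :: "('v::real_vector \<Rightarrow> real) set \<Rightarrow> ('v \<Rightarrow> real) \<Rightarrow> bool" where
  "cont_linear_form P l \<longleftrightarrow> linear l \<and> continuous_map (seminorm_topology P) euclideanreal l"

definition dual_seminorm :: "('v::real_vector \<Rightarrow> real) \<Rightarrow> ('v \<Rightarrow> real) \<Rightarrow> ereal" where
  "dual_seminorm p l = (SUP v\<in>{v. p v \<le> 1}. ereal (l v))"

definition diff_quot :: "(real^'m \<Rightarrow> 'v::real_vector) \<Rightarrow> 'm \<Rightarrow> real^'m \<Rightarrow> real \<Rightarrow> 'v" where
  "diff_quot g i x h = (1 / h) *\<^sub>R (g (x + h *\<^sub>R axis i 1) - g x)"

definition has_partial_at ::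
  "('v::real_vector \<Rightarrow> real) set \<Rightarrow> (real^'m \<Rightarrow> 'v) \<Rightarrow> 'm \<Rightarrow> real^'m \<Rightarrow> bool" where
  "has_partial_at P g i x \<longleftrightarrow> (\<exists>y. limitin (seminorm_topology P) (diff_quot g i x) y (at 0))"

definition partial ::
  "('v::real_vector \<Rightarrow> real) set \<Rightarrow> 'm \<Rightarrow> (real^'m \<Rightarrow> 'v) \<Rightarrow> real^'m \<Rightarrow> 'v" where
  "partial P i g x = (THE y. limitin (seminorm_topology P) (diff_quot g i x) y (at 0))"

text \<open>Iterated partial derivative along a list of coordinate directions
  (the last element of the list is differentiated first).\<close>
fun iter_partial ::
  "('v::real_vector \<Rightarrow> real) set \<Rightarrow> 'm list \<Rightarrow> (real^'m \<Rightarrow> 'v) \<Rightarrow> real^'m \<Rightarrow> 'v" where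
  "iter_partial P [] g = g"
| "iter_partial P (i # is) g = partial P i (iter_partial P is g)"

fun partials_exist ::
  "('v::real_vector \<Rightarrow> real) set \<Rightarrow> (real^'m) set \<Rightarrow> 'm list \<Rightarrow> (real^'m \<Rightarrow> 'v) \<Rightarrow> bool" where
  "partials_exist P \<Omega> [] g = True"
| "partials_exist P \<Omega> (i # is) g \<longleftrightarrow> partials_exist P \<Omega> is g \<and>
      (\<forall>x\<in>\<Omega>. has_partial_at P (iter_partial P is g) i x)"

definition intpart :: "real \<Rightarrow> nat" where "intpart k = nat \<lfloor>k\<rfloor>"
definition fracpart :: "real \<Rightarrow> real" where "fracpart k = k - of_int \<lfloor>k\<rfloor>"

definition Ck :: "('v::real_vector \<Rightarrow> real) set \<Rightarrow> real \<Rightarrow> (real^'m) set \<Rightarrow> (real^'m \<Rightarrow> 'v) \<Rightarrow> bool" where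
  "Ck P k \<Omega> f \<longleftrightarrow>
     (\<forall>p\<in>P. \<exists>B. \<forall>x\<in>\<Omega>. p (f x) \<le> B) \<and>
     (\<forall>is. length is \<le> intpart k \<longrightarrow>
        partials_exist P \<Omega> is f \<and>
        (\<forall>p\<in>P. \<exists>B. \<forall>s\<in>\<Omega>. \<forall>t\<in>\<Omega>. s \<noteq> t \<longrightarrow>
            p (iter_partial P is f s - iter_partial P is f t) / dist s t powr fracpart k \<le> B))"

definition supnn :: "real set \<Rightarrow> real" where "supnn S = Sup (insert 0 S)"

definition hoelder_semi :: "('v::real_vector \<Rightarrow> real) \<Rightarrow> real \<Rightarrow> (real^'m) set \<Rightarrow> (real^'m \<Rightarrow> 'v) \<Rightarrow> real" where
  "hoelder_semi p a \<Omega> g = supnn {p (g s - g t) / dist s t powr a | s t. s \<in> \<Omega> \<and> t \<in> \<Omega> \<and> s \<noteq> t}"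

text \<open>p_k(f); for V = R, P = {abs}, p = abs this is the Hoelder norm |f|_k.\<close>
definition Ck_norm :: "('v::real_vector \<Rightarrow> real) set \<Rightarrow> ('v \<Rightarrow> real) \<Rightarrow> real \<Rightarrow> (real^'m) set \<Rightarrow> (real^'m \<Rightarrow> 'v) \<Rightarrow> real" where
  "Ck_norm P p k \<Omega> f = supnn (insert (supnn ((\<lambda>x. p (f x)) ` \<Omega>))
      {hoelder_semi p (fracpart k) \<Omega> (iter_partial P is f) | is. length is \<le> intpart k})"

end

theory Submission
  imports Defs
begin

text \<open>A continuous linear form \<open>l\<close> commutes with difference quotients, so the partial
  derivatives of \<open>l \<circ> f\<close> are \<open>l\<close> applied to those of \<open>f\<close>; together with
  \<open>\<bar>l v\<bar> \<le> p*(l) p(v)\<close> this gives \<open>|l \<circ> f|\<^sub>k \<le> p*(l) p\<^sub>k(f)\<close>. Conversely, by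
  Hahn--Banach \<open>p(v) = sup {l v | p*(l) \<le> 1}\<close>, so the scalar bounds control \<open>p\<close> on \<open>f\<close>
  and on the Hoelder quotients of its partial derivatives, once these exist. Existence is
  proved by induction on the order: for \<open>p*(l) \<le> 1\<close> the mean value theorem and the uniform
  Hoelder bound on the next partial derivative of \<open>l \<circ> g\<close> show that the difference
  quotients \<open>\<Delta>\<^sub>h g\<close> of \<open>g\<close> satisfy \<open>l (\<Delta>\<^sub>h g - \<Delta>\<^sub>t g) \<le> C (\<bar>h\<bar>\<^sup>\<alpha> + \<bar>t\<bar>\<^sup>\<alpha>)\<close>
  with \<open>\<alpha> = {k} > 0\<close> (this is where \<open>k \<notin> \<nat>\<close> is used). Hence they are Cauchy for
  every seminorm and converge by sequential completeness.\<close>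

section \<open>Seminorms and the topology they induce\<close>

lemma seminorm_triangle: "seminorm p \<Longrightarrow> p (x + y) \<le> p x + p y"
  unfolding seminorm_def by blast

lemma seminorm_scaleR: "seminorm p \<Longrightarrow> p (c *\<^sub>R x) = \<bar>c\<bar> * p x"
  unfolding seminorm_def by blast

lemma seminorm_zero: "seminorm p \<Longrightarrow> p 0 = 0"
  using seminorm_scaleR[of p 0 0] by simp

lemma seminorm_minus: "seminorm p \<Longrightarrow> p (- x) = p x"
  using seminorm_scaleR[of p "- 1" x] by simp

lemma seminorm_nonneg: "seminorm p \<Longrightarrow> 0 \<le> p x"
  using seminorm_triangle[of p x "- x"] seminorm_zero[of p] seminorm_minus[of p x] by simp

lemma seminorm_diff_triangle: "seminorm p \<Longrightarrow> p (x - z) \<le> p (x - y) + p (y - z)"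
  using seminorm_triangle[of p "x - y" "y - z"] by simp

lemma seminorm_sum:
  assumes "\<And>p. p \<in> F \<Longrightarrow> seminorm p"
  shows "seminorm (\<lambda>v. \<Sum>p\<in>F. p v)"
  unfolding seminorm_def
  using assms by (auto simp: sum.distrib[symmetric] sum_distrib_left seminorm_scaleR
      intro!: sum_mono seminorm_triangle)

lemma seminorm_abs: "seminorm (abs :: real \<Rightarrow> real)"
  by (simp add: seminorm_def abs_triangle_ineq abs_mult)

lemma abs_linear_le_seminorm:
  assumes q: "seminorm q" and l: "linear l" and bounded: "\<And>v. q v < 1 \<Longrightarrow> \<bar>l v\<bar> \<le> M"
  shows "\<bar>l v\<bar> \<le> M * q v"
proof (rule field_le_epsilon)
  fix e :: real assume e: "0 < e"
  have M: "0 \<le> M" using bounded[of 0] seminorm_zero[OF q] linear_0[OF l] by simp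
  define c where "c = q v + e / (M + 1)"
  have c: "0 < c" using e M seminorm_nonneg[OF q] unfolding c_def by (simp add: add_nonneg_pos)
  have "q ((1 / c) *\<^sub>R v) < 1"
    using c e M by (simp add: seminorm_scaleR[OF q] c_def field_simps)
  then have "\<bar>l ((1 / c) *\<^sub>R v)\<bar> \<le> M" by (rule bounded)
  then have "\<bar>l v\<bar> / c \<le> M"
    using c by (simp add: linear_scale[OF l] abs_mult)
  then have "\<bar>l v\<bar> \<le> M * q v + M * (e / (M + 1))"
    using c by (simp add: c_def field_simps)
  also have "M * (e / (M + 1)) \<le> e"
    using M e by (simp add: field_simps)
  finally show "\<bar>l v\<bar> \<le> M * q v + e" by simp
qed

lemma istopology_seminorm_topology:
  fixes P :: "('a::real_vector \<Rightarrow> real) set"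
  shows "istopology (\<lambda>U. \<forall>x\<in>U. \<exists>F r. finite F \<and> F \<subseteq> P \<and> r > 0 \<and> {y. \<forall>p\<in>F. p (y - x) < r} \<subseteq> U)"
  unfolding istopology_def
proof (intro conjI allI impI ballI)
  fix S T :: "'a set" and x
  assume "\<forall>x\<in>S. \<exists>F r. finite F \<and> F \<subseteq> P \<and> r > 0 \<and> {y. \<forall>p\<in>F. p (y - x) < r} \<subseteq> S"
    and "\<forall>x\<in>T. \<exists>F r. finite F \<and> F \<subseteq> P \<and> r > 0 \<and> {y. \<forall>p\<in>F. p (y - x) < r} \<subseteq> T"
    and "x \<in> S \<inter> T"
  then obtain F1 r1 F2 r2 where
    "finite F1" "F1 \<subseteq> P" "r1 > 0" "{y. \<forall>p\<in>F1. p (y - x) < r1} \<subseteq> S"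
    "finite F2" "F2 \<subseteq> P" "r2 > 0" "{y. \<forall>p\<in>F2. p (y - x) < r2} \<subseteq> T"
    by (meson IntD1 IntD2)
  then show "\<exists>F r. finite F \<and> F \<subseteq> P \<and> r > 0 \<and> {y. \<forall>p\<in>F. p (y - x) < r} \<subseteq> S \<inter> T"
    by (intro exI[of _ "F1 \<union> F2"] exI[of _ "min r1 r2"]) auto
next
  fix K :: "'a set set" and x
  assume "\<forall>S\<in>K. \<forall>x\<in>S. \<exists>F r. finite F \<and> F \<subseteq> P \<and> r > 0 \<and> {y. \<forall>p\<in>F. p (y - x) < r} \<subseteq> S"
    and "x \<in> \<Union> K"
  then show "\<exists>F r. finite F \<and> F \<subseteq> P \<and> r > 0 \<and> {y. \<forall>p\<in>F. p (y - x) < r} \<subseteq> \<Union> K"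
    by (meson UnionE Union_upper order_trans)
qed

lemma openin_seminorm_topology:
  "openin (seminorm_topology P) U \<longleftrightarrow>
    (\<forall>x\<in>U. \<exists>F r. finite F \<and> F \<subseteq> P \<and> r > 0 \<and> {y. \<forall>p\<in>F. p (y - x) < r} \<subseteq> U)"
proof -
  have "openin (seminorm_topology P) = (\<lambda>U. \<forall>x\<in>U. \<exists>F r. finite F \<and> F \<subseteq> P \<and> r > 0 \<and>
      {y. \<forall>p\<in>F. p (y - x) < r} \<subseteq> U)"
    unfolding seminorm_topology_def by (rule topology_inverse'[OF istopology_seminorm_topology])
  then show ?thesis by simp
qed

lemma topspace_seminorm_topology [simp]: "topspace (seminorm_topology P) = UNIV"
proof -
  have "openin (seminorm_topology P) UNIV"
    unfolding openin_seminorm_topology by (intro ballI exI[of _ "{}"] exI[of _ 1]) auto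
  then show ?thesis by (simp add: openin_subset subset_antisym)
qed

lemma openin_seminorm_ball:
  assumes "seminorm p" "p \<in> P"
  shows "openin (seminorm_topology P) {z. p (z - y) < e}"
  unfolding openin_seminorm_topology
proof
  fix x assume "x \<in> {z. p (z - y) < e}"
  moreover have "{z. p (z - x) < e - p (x - y)} \<subseteq> {z. p (z - y) < e}"
  proof
    fix z assume "z \<in> {z. p (z - x) < e - p (x - y)}"
    then show "z \<in> {z. p (z - y) < e}" using seminorm_diff_triangle[OF assms(1), of z y x] by simp
  qed
  ultimately show "\<exists>F r. finite F \<and> F \<subseteq> P \<and> r > 0 \<and> {z. \<forall>q\<in>F. q (z - x) < r} \<subseteq> {z. p (z - y) < e}"
    using assms(2) by (intro exI[of _ "{p}"] exI[of _ "e - p (x - y)"]) auto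
qed

lemma limitin_seminorm_topology:
  assumes "\<forall>p\<in>P. seminorm p"
  shows "limitin (seminorm_topology P) g y F \<longleftrightarrow> (\<forall>p\<in>P. \<forall>e>0. eventually (\<lambda>x. p (g x - y) < e) F)"
proof
  assume lim: "limitin (seminorm_topology P) g y F"
  show "\<forall>p\<in>P. \<forall>e>0. eventually (\<lambda>x. p (g x - y) < e) F"
  proof (intro ballI allI impI)
    fix p and e :: real assume "p \<in> P" "0 < e"
    then show "eventually (\<lambda>x. p (g x - y) < e) F"
      using limitinD[OF lim openin_seminorm_ball] assms seminorm_zero by fastforce
  qed
next
  assume ev: "\<forall>p\<in>P. \<forall>e>0. eventually (\<lambda>x. p (g x - y) < e) F"
  show "limitin (seminorm_topology P) g y F"
    unfolding limitin_def
  proof (intro conjI allI impI)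
    fix U assume "openin (seminorm_topology P) U \<and> y \<in> U"
    then obtain G r where "finite G" "G \<subseteq> P" "r > 0" and sub: "{z. \<forall>p\<in>G. p (z - y) < r} \<subseteq> U"
      unfolding openin_seminorm_topology by blast
    then have "eventually (\<lambda>x. \<forall>p\<in>G. p (g x - y) < r) F"
      using ev by (simp add: eventually_ball_finite subset_iff)
    then show "eventually (\<lambda>x. g x \<in> U) F"
      by (rule eventually_mono) (use sub in blast)
  qed simp
qed

lemma seminorm_topology_abs: "seminorm_topology {abs :: real \<Rightarrow> real} = euclideanreal"
proof (rule topology_eq[THEN iffD2], intro allI)
  fix U :: "real set"
  have "(\<exists>F r. finite F \<and> F \<subseteq> {abs} \<and> r > 0 \<and> {y. \<forall>p\<in>F. p (y - x) < r} \<subseteq> U) \<longleftrightarrow>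
      (\<exists>e>0. \<forall>y. dist y x < e \<longrightarrow> y \<in> U)" for x
  proof
    assume "\<exists>F r. finite F \<and> F \<subseteq> {abs} \<and> r > 0 \<and> {y. \<forall>p\<in>F. p (y - x) < r} \<subseteq> U"
    then obtain F r where "F \<subseteq> {abs}" "r > 0" "{y. \<forall>p\<in>F. p (y - x) < r} \<subseteq> U" by blast
    then show "\<exists>e>0. \<forall>y. dist y x < e \<longrightarrow> y \<in> U"
      by (intro exI[of _ r]) (force simp: dist_real_def)
  next
    assume "\<exists>e>0. \<forall>y. dist y x < e \<longrightarrow> y \<in> U"
    then show "\<exists>F r. finite F \<and> F \<subseteq> {abs} \<and> r > 0 \<and> {y. \<forall>p\<in>F. p (y - x) < r} \<subseteq> U"
      by (auto simp: dist_real_def intro!: exI[of _ "{abs}"])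
  qed
  then show "openin (seminorm_topology {abs}) U = openin euclidean U"
    by (simp add: openin_seminorm_topology open_dist)
qed

section \<open>Continuous linear forms and the dual seminorm\<close>

lemma cont_linear_form_bound:
  assumes sn: "\<forall>p\<in>P. seminorm p" and l: "cont_linear_form P l"
  obtains F c where "finite F" "F \<subseteq> P" "0 \<le> c" "\<And>v. \<bar>l v\<bar> \<le> c * (\<Sum>p\<in>F. p v)"
proof -
  have lin: "linear l" and cont: "continuous_map (seminorm_topology P) euclideanreal l"
    using l unfolding cont_linear_form_def by auto
  have "openin (seminorm_topology P) {v. \<bar>l v\<bar> < 1}"
    using openin_continuous_map_preimage[OF cont, of "{-1<..<1}"] by (simp add: abs_less_iff conj_commute)
  moreover have "0 \<in> {v. \<bar>l v\<bar> < 1}" using linear_0[OF lin] by simp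
  ultimately have "\<exists>F r. finite F \<and> F \<subseteq> P \<and> r > 0 \<and> {y. \<forall>p\<in>F. p (y - 0) < r} \<subseteq> {v. \<bar>l v\<bar> < 1}"
    unfolding openin_seminorm_topology by (rule bspec)
  then obtain F r where F: "finite F" "F \<subseteq> P" "r > 0"
    and sub: "{y. \<forall>p\<in>F. p (y - 0) < r} \<subseteq> {v. \<bar>l v\<bar> < 1}"
    by blast
  have snF: "\<And>p. p \<in> F \<Longrightarrow> seminorm p" using F(2) sn by blast
  have "r * \<bar>l v\<bar> \<le> 1 * (\<Sum>p\<in>F. p v)" for v
  proof -
    have "\<bar>l (r *\<^sub>R w)\<bar> \<le> 1" if "(\<Sum>p\<in>F. p w) < 1" for w
    proof -
      have "p (r *\<^sub>R w) < r" if "p \<in> F" for p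
      proof -
        have "p w \<le> (\<Sum>p\<in>F. p w)"
          using member_le_sum[OF that, of "\<lambda>p. p w"] F(1) snF seminorm_nonneg by blast
        then show ?thesis using \<open>(\<Sum>p\<in>F. p w) < 1\<close> F(3) seminorm_scaleR[OF snF[OF that]] by simp
      qed
      then have "r *\<^sub>R w \<in> {y. \<forall>p\<in>F. p (y - 0) < r}" by simp
      then show ?thesis using sub by auto
    qed
    moreover have "linear (\<lambda>v. l (r *\<^sub>R v))"
      by (simp add: linear_iff scaleR_add_right linear_add[OF lin] linear_scale[OF lin] distrib_left)
    ultimately have "\<bar>l (r *\<^sub>R v)\<bar> \<le> 1 * (\<Sum>p\<in>F. p v)"
      by (intro abs_linear_le_seminorm[OF seminorm_sum[OF snF]]) auto
    then show ?thesis using F(3) by (simp add: linear_scale[OF lin] abs_mult)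
  qed
  then have "\<bar>l v\<bar> \<le> (1 / r) * (\<Sum>p\<in>F. p v)" for v
    using F(3) by (simp add: field_simps)
  with F show thesis by (intro that[OF F(1,2), of "1 / r"]) auto
qed

lemma cont_linear_form_if_bounded:
  assumes sn: "\<forall>p\<in>P. seminorm p" and lin: "linear l" and p: "p \<in> P"
    and bound: "\<And>v. \<bar>l v\<bar> \<le> c * p v"
  shows "cont_linear_form P l"
  unfolding cont_linear_form_def continuous_map_def
proof (intro conjI allI impI lin)
  fix U :: "real set" assume "openin euclideanreal U"
  show "openin (seminorm_topology P) {x \<in> topspace (seminorm_topology P). l x \<in> U}"
    unfolding openin_seminorm_topology
  proof
    fix x assume "x \<in> {x \<in> topspace (seminorm_topology P). l x \<in> U}"
    then have "l x \<in> U" by simp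
    then obtain e where e: "e > 0" "ball (l x) e \<subseteq> U"
      using \<open>openin euclideanreal U\<close> open_contains_ball by (metis open_openin)
    define c' where "c' = \<bar>c\<bar> + 1"
    have c': "0 < c'" unfolding c'_def by simp
    have "l y \<in> U" if "p (y - x) < e / c'" for y
    proof -
      have "\<bar>l y - l x\<bar> \<le> c * p (y - x)" using bound[of "y - x"] by (simp add: linear_diff[OF lin])
      also have "\<dots> \<le> c' * p (y - x)"
        unfolding c'_def using seminorm_nonneg[of p "y - x"] sn p by (intro mult_right_mono) auto
      also have "\<dots> < e" using that c' by (simp add: field_simps)
      finally show ?thesis using e(2) by (auto simp: dist_real_def abs_minus_commute)
    qed
    then show "\<exists>F r. finite F \<and> F \<subseteq> P \<and> r > 0 \<and>
        {y. \<forall>p\<in>F. p (y - x) < r} \<subseteq> {x \<in> topspace (seminorm_topology P). l x \<in> U}"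
      using p e(1) c' by (intro exI[of _ "{p}"] exI[of _ "e / c'"]) auto
  qed
qed simp

lemma dual_seminorm_upper: "p v \<le> 1 \<Longrightarrow> ereal (l v) \<le> dual_seminorm p l"
  unfolding dual_seminorm_def by (rule SUP_upper) simp

lemma dual_seminorm_nonneg: "seminorm p \<Longrightarrow> linear l \<Longrightarrow> 0 \<le> dual_seminorm p l"
  using dual_seminorm_upper[of p 0 l] by (simp add: seminorm_zero linear_0 zero_ereal_def)

lemma dual_seminorm_le_1:
  assumes "\<And>v. l v \<le> p v"
  shows "dual_seminorm p l \<le> 1"
  unfolding dual_seminorm_def
proof (rule SUP_least)
  fix v assume "v \<in> {v. p v \<le> 1}"
  then show "ereal (l v) \<le> 1" using assms[of v] by (simp add: one_ereal_def)
qed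

lemma abs_le_dual_seminorm:
  assumes p: "seminorm p" and lin: "linear l" and d: "dual_seminorm p l = ereal d"
  shows "\<bar>l v\<bar> \<le> d * p v"
proof (rule abs_linear_le_seminorm[OF p lin])
  fix w assume "p w < 1"
  then have "ereal (l w) \<le> ereal d" "ereal (l (- w)) \<le> ereal d"
    using dual_seminorm_upper[of p _ l] d seminorm_minus[OF p, of w] by auto
  then show "\<bar>l w\<bar> \<le> d" by (simp add: linear_neg[OF lin])
qed

section \<open>Norming functionals (Hahn--Banach)\<close>

definition sublinear :: "('a::real_vector \<Rightarrow> real) \<Rightarrow> bool" where
  "sublinear q \<longleftrightarrow> (\<forall>x y. q (x + y) \<le> q x + q y) \<and> (\<forall>c>0. \<forall>x. q (c *\<^sub>R x) = c * q x)"

lemma sublinear_add: "sublinear q \<Longrightarrow> q (x + y) \<le> q x + q y"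
  unfolding sublinear_def by blast

lemma sublinear_scaleR: "sublinear q \<Longrightarrow> 0 < c \<Longrightarrow> q (c *\<^sub>R x) = c * q x"
  unfolding sublinear_def by blast

lemma sublinear_zero: "sublinear q \<Longrightarrow> q 0 = 0"
  using sublinear_scaleR[of q 2 0] by simp

lemma sublinear_scaleR_nonneg: "sublinear q \<Longrightarrow> 0 \<le> c \<Longrightarrow> q (c *\<^sub>R x) = c * q x"
  by (cases "c = 0") (simp_all add: sublinear_zero sublinear_scaleR)

lemma sublinear_minus_le: "sublinear q \<Longrightarrow> - q (- x) \<le> q x"
  using sublinear_add[of q x "- x"] sublinear_zero[of q] by simp

lemma seminorm_imp_sublinear: "seminorm p \<Longrightarrow> sublinear p"
  unfolding sublinear_def by (simp add: seminorm_triangle seminorm_scaleR)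

text \<open>For sublinear \<open>q\<close>, the functional \<open>sublinear_reduce q a\<close> is sublinear, lies below
  \<open>q\<close> and is at most \<open>- q a\<close> at \<open>- a\<close>. A minimal sublinear functional \<open>m\<close> therefore has
  \<open>m (- a) \<le> - m a\<close> for all \<open>a\<close>, i.e. it is linear; Zorn's lemma provides one below any
  sublinear functional.\<close>

definition sublinear_reduce :: "('a::real_vector \<Rightarrow> real) \<Rightarrow> 'a \<Rightarrow> 'a \<Rightarrow> real" where
  "sublinear_reduce q a x = Inf ((\<lambda>t. q (x + t *\<^sub>R a) - t * q a) ` {0..})"

lemma sublinear_reduce_le:
  assumes q: "sublinear q" and t: "0 \<le> t"
  shows "sublinear_reduce q a x \<le> q (x + t *\<^sub>R a) - t * q a"
  unfolding sublinear_reduce_def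
proof (rule cInf_lower)
  show "bdd_below ((\<lambda>t. q (x + t *\<^sub>R a) - t * q a) ` {0..})"
  proof (rule bdd_belowI2)
    fix s :: real assume "s \<in> {0..}"
    then have "s * q a \<le> q (x + s *\<^sub>R a) + q (- x)"
      using sublinear_add[OF q, of "x + s *\<^sub>R a" "- x"] sublinear_scaleR_nonneg[OF q] by simp
    then show "- q (- x) \<le> q (x + s *\<^sub>R a) - s * q a" by simp
  qed
qed (use t in simp)

lemma sublinear_reduce_greatest:
  "(\<And>t. 0 \<le> t \<Longrightarrow> m \<le> q (x + t *\<^sub>R a) - t * q a) \<Longrightarrow> m \<le> sublinear_reduce q a x"
  unfolding sublinear_reduce_def by (rule cInf_greatest) auto

lemma sublinear_reduce_le_self: "sublinear q \<Longrightarrow> sublinear_reduce q a x \<le> q x"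
  using sublinear_reduce_le[of q 0 a x] by simp

lemma sublinear_reduce_minus: "sublinear q \<Longrightarrow> sublinear_reduce q a (- a) \<le> - q a"
  using sublinear_reduce_le[of q 1 a "- a"] sublinear_zero[of q] by simp

lemma sublinear_sublinear_reduce:
  assumes q: "sublinear q"
  shows "sublinear (sublinear_reduce q a)"
  unfolding sublinear_def
proof (intro conjI allI impI)
  fix x y
  have "sublinear_reduce q a (x + y) - (q (y + t *\<^sub>R a) - t * q a) \<le> q (x + s *\<^sub>R a) - s * q a"
    if "0 \<le> s" "0 \<le> t" for s t
  proof -
    have "sublinear_reduce q a (x + y) \<le> q ((x + s *\<^sub>R a) + (y + t *\<^sub>R a)) - (s + t) * q a"
      using sublinear_reduce_le[OF q, of "s + t" a "x + y"] that by (simp add: algebra_simps)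
    also have "\<dots> \<le> q (x + s *\<^sub>R a) + q (y + t *\<^sub>R a) - (s + t) * q a"
      using sublinear_add[OF q] by simp
    finally show ?thesis by (simp add: algebra_simps)
  qed
  then have "sublinear_reduce q a (x + y) - (q (y + t *\<^sub>R a) - t * q a) \<le> sublinear_reduce q a x"
    if "0 \<le> t" for t
    using that by (intro sublinear_reduce_greatest) auto
  then have "sublinear_reduce q a (x + y) - sublinear_reduce q a x \<le> sublinear_reduce q a y"
    by (intro sublinear_reduce_greatest) (simp add: algebra_simps)
  then show "sublinear_reduce q a (x + y) \<le> sublinear_reduce q a x + sublinear_reduce q a y"
    by simp
next
  fix c :: real and x assume c: "0 < c"
  have shift: "q (c *\<^sub>R x + t *\<^sub>R a) - t * q a = c * (q (x + (t / c) *\<^sub>R a) - (t / c) * q a)" for t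
  proof -
    have "c *\<^sub>R x + t *\<^sub>R a = c *\<^sub>R (x + (t / c) *\<^sub>R a)" using c by (simp add: algebra_simps)
    then have "q (c *\<^sub>R x + t *\<^sub>R a) = c * q (x + (t / c) *\<^sub>R a)"
      by (simp only: sublinear_scaleR[OF q c])
    then show ?thesis using c by (simp add: algebra_simps)
  qed
  have "sublinear_reduce q a (c *\<^sub>R x) / c \<le> sublinear_reduce q a x"
  proof (rule sublinear_reduce_greatest)
    fix t :: real assume "0 \<le> t"
    then have "sublinear_reduce q a (c *\<^sub>R x) \<le> c * (q (x + t *\<^sub>R a) - t * q a)"
      using sublinear_reduce_le[OF q, of "c * t" a "c *\<^sub>R x"] shift[of "c * t"] c by simp
    then show "sublinear_reduce q a (c *\<^sub>R x) / c \<le> q (x + t *\<^sub>R a) - t * q a"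
      using c by (simp add: field_simps)
  qed
  moreover have "c * sublinear_reduce q a x \<le> sublinear_reduce q a (c *\<^sub>R x)"
  proof (rule sublinear_reduce_greatest)
    fix t :: real assume "0 \<le> t"
    then show "c * sublinear_reduce q a x \<le> q (c *\<^sub>R x + t *\<^sub>R a) - t * q a"
      using sublinear_reduce_le[OF q, of "t / c" a x] c shift[of t] by simp
  qed
  ultimately show "sublinear_reduce q a (c *\<^sub>R x) = c * sublinear_reduce q a x"
    using c by (simp add: field_simps)
qed

lemma linear_if_sublinear_reduce_eq:
  assumes m: "sublinear m" and fixed: "\<And>a. sublinear_reduce m a = m"
  shows "linear m"
proof -
  have odd: "m (- a) = - m a" for a
    using sublinear_reduce_minus[OF m, of a] sublinear_minus_le[OF m, of a] fixed[of a] by simp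
  show ?thesis
  proof (rule linearI)
    fix x y
    show "m (x + y) = m x + m y"
      using sublinear_add[OF m, of x y] sublinear_add[OF m, of "- x" "- y"] odd[of x] odd[of y]
        odd[of "x + y"] by (simp add: add.commute)
  next
    fix c :: real and x
    show "m (c *\<^sub>R x) = c *\<^sub>R m x"
    proof (cases "0 \<le> c")
      case True
      then show ?thesis by (simp add: sublinear_scaleR_nonneg[OF m])
    next
      case False
      then have "m ((- c) *\<^sub>R x) = - c * m x" by (intro sublinear_scaleR[OF m]) simp
      then show ?thesis using odd[of "(- c) *\<^sub>R x"] by simp
    qed
  qed
qed

lemma sublinear_chain_Inf:
  fixes C :: "('a::real_vector \<Rightarrow> real) set"
  assumes "C \<noteq> {}" and C: "\<And>q. q \<in> C \<Longrightarrow> sublinear q \<and> q \<le> q0"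
    and chain: "\<And>q1 q2. q1 \<in> C \<Longrightarrow> q2 \<in> C \<Longrightarrow> q1 \<le> q2 \<or> q2 \<le> q1"
  defines "m \<equiv> \<lambda>x. Inf ((\<lambda>q. q x) ` C)"
  shows "sublinear m" and "\<And>q. q \<in> C \<Longrightarrow> m \<le> q"
proof -
  have bdd: "bdd_below ((\<lambda>q. q x) ` C)" for x
  proof (rule bdd_belowI2)
    fix q assume "q \<in> C"
    then have "q (- x) \<le> q0 (- x)" "- q (- x) \<le> q x"
      using C[of q] sublinear_minus_le[of q x] by (auto simp: le_fun_def)
    then show "- q0 (- x) \<le> q x" by linarith
  qed
  have lower: "m x \<le> q x" if "q \<in> C" for q x
    unfolding m_def using that by (intro cInf_lower[OF _ bdd]) simp
  then show "m \<le> q" if "q \<in> C" for q using that by (simp add: le_fun_def)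
  have greatest: "z \<le> m x" if "\<And>q. q \<in> C \<Longrightarrow> z \<le> q x" for z x
    unfolding m_def using \<open>C \<noteq> {}\<close> that by (intro cInf_greatest) auto
  show "sublinear m" unfolding sublinear_def
  proof (intro conjI allI impI)
    fix x y
    show "m (x + y) \<le> m x + m y"
    proof (rule field_le_epsilon)
      fix e :: real assume e: "0 < e"
      obtain qa where qa: "qa \<in> C" "qa x < m x + e / 2"
        using cInf_lessD[of "(\<lambda>q. q x) ` C" "m x + e / 2"] \<open>C \<noteq> {}\<close> e unfolding m_def by auto
      obtain qb where qb: "qb \<in> C" "qb y < m y + e / 2"
        using cInf_lessD[of "(\<lambda>q. q y) ` C" "m y + e / 2"] \<open>C \<noteq> {}\<close> e unfolding m_def by auto
      \<comment> \<open>the smaller of \<open>qa\<close>, \<open>qb\<close> is close to the infimum at both points\<close>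
      obtain q where q: "q \<in> C" "q x < m x + e / 2" "q y < m y + e / 2"
        using chain[OF qa(1) qb(1)] qa qb by (auto simp: le_fun_def intro: le_less_trans)
      have "m (x + y) \<le> q x + q y"
        using lower[OF q(1), of "x + y"] sublinear_add[OF C[OF q(1), THEN conjunct1], of x y] by linarith
      then show "m (x + y) \<le> m x + m y + e" using q by simp
    qed
  next
    fix c :: real and x assume c: "0 < c"
    have scale: "q (c *\<^sub>R x) = c * q x" if "q \<in> C" for q
      using sublinear_scaleR[OF C[OF that, THEN conjunct1] c] .
    have "m (c *\<^sub>R x) / c \<le> m x"
      using lower[of _ "c *\<^sub>R x"] c scale by (intro greatest) (simp add: field_simps)
    moreover have "c * m x \<le> m (c *\<^sub>R x)"
    proof (rule greatest)
      fix q assume "q \<in> C"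
      then show "c * m x \<le> q (c *\<^sub>R x)"
        using mult_left_mono[OF lower[OF \<open>q \<in> C\<close>, of x], of c] scale c by simp
    qed
    ultimately show "m (c *\<^sub>R x) = c * m x" using c by (simp add: field_simps)
  qed
qed

lemma sublinear_linear_minorant:
  fixes q0 :: "'a::real_vector \<Rightarrow> real"
  assumes "sublinear q0"
  obtains m where "linear m" "m \<le> q0"
proof -
  define S where "S = {q. sublinear q \<and> q \<le> q0}"
  have "partial_order_on S (relation_of (\<ge>) S)"
    by (rule partial_order_on_relation_ofI) auto
  moreover have "\<exists>u\<in>S. \<forall>q\<in>C. u \<le> q" if "C \<in> Chains (relation_of (\<ge>) S)" for C
  proof (cases "C = {}")
    case True
    then show ?thesis using assms by (auto simp: S_def)
  next
    case False
    have "C \<subseteq> S" using Chains_relation_of[OF that] .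
    then have CS: "\<And>q. q \<in> C \<Longrightarrow> sublinear q \<and> q \<le> q0" unfolding S_def by auto
    have "q1 \<le> q2 \<or> q2 \<le> q1" if "q1 \<in> C" "q2 \<in> C" for q1 q2
      using \<open>C \<in> Chains _\<close> that unfolding Chains_def relation_of_def by auto
    then have inf: "sublinear (\<lambda>x. Inf ((\<lambda>q. q x) ` C))" "\<forall>q\<in>C. (\<lambda>x. Inf ((\<lambda>q. q x) ` C)) \<le> q"
      using sublinear_chain_Inf[OF False CS] by auto
    moreover obtain q1 where "q1 \<in> C" using False by blast
    ultimately have "(\<lambda>x. Inf ((\<lambda>q. q x) ` C)) \<in> S"
      using \<open>C \<subseteq> S\<close> unfolding S_def by (auto intro: order_trans)
    then show ?thesis using inf(2) by blast
  qed
  ultimately obtain m where m: "m \<in> S" and minimal: "\<And>q. q \<in> S \<Longrightarrow> q \<le> m \<Longrightarrow> q = m"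
    using predicate_Zorn[of S "(\<ge>)"] by auto
  have "sublinear_reduce m a = m" for a
  proof (rule minimal)
    show "sublinear_reduce m a \<le> m"
      using m sublinear_reduce_le_self unfolding S_def by (auto simp: le_fun_def)
    then show "sublinear_reduce m a \<in> S"
      using m sublinear_sublinear_reduce unfolding S_def by (auto intro: order_trans)
  qed
  then have "linear m" using m unfolding S_def by (auto intro: linear_if_sublinear_reduce_eq)
  then show thesis using m that unfolding S_def by auto
qed

lemma seminorm_norming_functional:
  assumes p: "seminorm p"
  obtains l where "linear l" "\<And>x. \<bar>l x\<bar> \<le> p x" "l v = p v"
proof -
  have q: "sublinear p" by (rule seminorm_imp_sublinear[OF p])
  obtain m where m: "linear m" "m \<le> sublinear_reduce p v"
    using sublinear_linear_minorant[OF sublinear_sublinear_reduce[OF q]] .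
  have le: "m x \<le> p x" for x
    using m(2) sublinear_reduce_le_self[OF q, of v x] by (auto simp: le_fun_def intro: order_trans)
  have "m (- v) \<le> - p v"
    using m(2) sublinear_reduce_minus[OF q, of v] by (auto simp: le_fun_def intro: order_trans)
  then have "m v = p v" using le[of v] linear_neg[OF m(1), of v] by simp
  moreover have "\<bar>m x\<bar> \<le> p x" for x
    using le[of x] le[of "- x"] linear_neg[OF m(1), of x] seminorm_minus[OF p, of x] by simp
  ultimately show thesis using m(1) that by blast
qed

lemma norming_cont_linear_form:
  assumes sn: "\<forall>p\<in>P. seminorm p" and p: "p \<in> P"
  obtains l where "cont_linear_form P l" "dual_seminorm p l \<le> 1" "l v = p v"
proof -
  obtain l where l: "linear l" "\<And>x. \<bar>l x\<bar> \<le> p x" "l v = p v"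
    using seminorm_norming_functional[of p v] sn p by blast
  have "cont_linear_form P l"
    using l(2) by (intro cont_linear_form_if_bounded[OF sn l(1) p, of 1]) simp
  moreover have "dual_seminorm p l \<le> 1"
    using l(2) by (intro dual_seminorm_le_1) (simp add: abs_le_iff)
  ultimately show thesis using l(3) that by blast
qed

lemma seminorm_le_if_dual_bounded:
  assumes sn: "\<forall>p\<in>P. seminorm p" and p: "p \<in> P"
    and bound: "\<And>l. cont_linear_form P l \<Longrightarrow> dual_seminorm p l \<le> 1 \<Longrightarrow> l v \<le> M"
  shows "p v \<le> M"
  using norming_cont_linear_form[OF sn p, of v] bound by metis

section \<open>Partial derivatives and continuous linear forms\<close>

lemma diff_quot_comp_linear: "linear l \<Longrightarrow> diff_quot (l \<circ> g) i x h = l (diff_quot g i x h)"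
  unfolding diff_quot_def by (simp add: linear_scale linear_diff)

lemma eventually_diff_quot_eq:
  assumes "open \<Omega>" "x \<in> \<Omega>" "\<forall>y\<in>\<Omega>. G y = H y"
  shows "eventually (\<lambda>h. diff_quot G i x h = diff_quot H i x h) (at 0)"
proof -
  obtain e where e: "e > 0" "ball x e \<subseteq> \<Omega>" using assms(1,2) open_contains_ball by blast
  have "x + h *\<^sub>R axis i 1 \<in> \<Omega>" if "dist h 0 < e" for h :: real
    using that e(2) by (auto simp: dist_norm)
  then show ?thesis
    unfolding eventually_at using e(1) assms(2,3) by (auto simp: diff_quot_def)
qed

lemma limitin_diff_quot_cong:
  assumes "open \<Omega>" "x \<in> \<Omega>" "\<forall>y\<in>\<Omega>. G y = H y"
  shows "limitin X (diff_quot G i x) v (at 0) \<longleftrightarrow> limitin X (diff_quot H i x) v (at 0)"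
proof -
  have "\<forall>y\<in>\<Omega>. H y = G y" using assms(3) by simp
  then show ?thesis
    using limitin_transform_eventually[OF eventually_diff_quot_eq[OF assms]]
      limitin_transform_eventually[OF eventually_diff_quot_eq[OF assms(1,2)]]
    by blast
qed

lemma has_partial_at_cong:
  assumes "open \<Omega>" "x \<in> \<Omega>" "\<forall>y\<in>\<Omega>. G y = H y"
  shows "has_partial_at Q G i x \<longleftrightarrow> has_partial_at Q H i x"
  unfolding has_partial_at_def by (simp only: limitin_diff_quot_cong[OF assms])

lemma partial_cong:
  assumes "open \<Omega>" "x \<in> \<Omega>" "\<forall>y\<in>\<Omega>. G y = H y"
  shows "partial Q i G x = partial Q i H x"
  unfolding partial_def by (simp only: limitin_diff_quot_cong[OF assms])

lemma partial_eqI: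
  assumes "Hausdorff_space (seminorm_topology Q)"
    and "limitin (seminorm_topology Q) (diff_quot g i x) v (at 0)"
  shows "partial Q i g x = v"
  unfolding partial_def
  using assms limitin_Hausdorff_unique[OF _ _ trivial_limit_at assms(1)] by blast

lemma has_partial_at_abs_tendsto:
  assumes "has_partial_at {abs} G i x"
  shows "(diff_quot G i x \<longlongrightarrow> partial {abs} i G x) (at 0)"
proof -
  obtain v where v: "limitin (seminorm_topology {abs}) (diff_quot G i x) v (at 0)"
    using assms unfolding has_partial_at_def by blast
  then have "partial {abs} i G x = v" by (intro partial_eqI) (simp_all add: seminorm_topology_abs)
  then show ?thesis using v by (simp add: seminorm_topology_abs)
qed

lemma has_partial_at_comp_cont_linear_form:
  assumes haus: "Hausdorff_space (seminorm_topology P)" and l: "cont_linear_form P l"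
    and g: "has_partial_at P g i x"
  shows "has_partial_at {abs} (l \<circ> g) i x" and "partial {abs} i (l \<circ> g) x = l (partial P i g x)"
proof -
  have lin: "linear l" and cont: "continuous_map (seminorm_topology P) euclideanreal l"
    using l unfolding cont_linear_form_def by auto
  obtain v where v: "limitin (seminorm_topology P) (diff_quot g i x) v (at 0)"
    using g unfolding has_partial_at_def by blast
  have "limitin euclideanreal (l \<circ> diff_quot g i x) (l v) (at 0)"
    by (rule continuous_map_limit[OF cont v])
  moreover have "l \<circ> diff_quot g i x = diff_quot (l \<circ> g) i x"
    by (simp add: fun_eq_iff diff_quot_comp_linear[OF lin])
  ultimately have lim: "limitin (seminorm_topology {abs}) (diff_quot (l \<circ> g) i x) (l v) (at 0)"
    by (simp add: seminorm_topology_abs)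
  then show "has_partial_at {abs} (l \<circ> g) i x" unfolding has_partial_at_def by blast
  show "partial {abs} i (l \<circ> g) x = l (partial P i g x)"
    using partial_eqI[OF _ lim] partial_eqI[OF haus v] by (simp add: seminorm_topology_abs)
qed

lemma iter_partial_comp_cont_linear_form:
  assumes haus: "Hausdorff_space (seminorm_topology P)" and \<Omega>: "open \<Omega>"
    and l: "cont_linear_form P l" and f: "partials_exist P \<Omega> is f"
  shows "partials_exist {abs} \<Omega> is (l \<circ> f) \<and>
    (\<forall>x\<in>\<Omega>. iter_partial {abs} is (l \<circ> f) x = l (iter_partial P is f x))"
  using f
proof (induction "is")
  case (Cons i "is")
  then have "partials_exist P \<Omega> is f"
    and g: "\<And>x. x \<in> \<Omega> \<Longrightarrow> has_partial_at P (iter_partial P is f) i x" by simp_all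
  with Cons.IH have IH: "partials_exist {abs} \<Omega> is (l \<circ> f)"
    and "\<forall>y\<in>\<Omega>. iter_partial {abs} is (l \<circ> f) y = l (iter_partial P is f y)"
    by blast+
  then have eq: "\<forall>y\<in>\<Omega>. iter_partial {abs} is (l \<circ> f) y = (l \<circ> iter_partial P is f) y"
    by simp
  have "has_partial_at {abs} (iter_partial {abs} is (l \<circ> f)) i x
      \<and> partial {abs} i (iter_partial {abs} is (l \<circ> f)) x = l (partial P i (iter_partial P is f) x)"
    if x: "x \<in> \<Omega>" for x
    using has_partial_at_comp_cont_linear_form[OF haus l g[OF x]]
      has_partial_at_cong[OF \<Omega> x eq] partial_cong[OF \<Omega> x eq]
    by (simp add: comp_def)
  then show ?case using IH by (simp add: comp_def)
qed simp

lemma supnn_upper: "bdd_above S \<Longrightarrow> x \<in> S \<Longrightarrow> x \<le> supnn S"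
  unfolding supnn_def by (rule cSup_upper) auto

lemma supnn_least: "0 \<le> M \<Longrightarrow> (\<And>x. x \<in> S \<Longrightarrow> x \<le> M) \<Longrightarrow> supnn S \<le> M"
  unfolding supnn_def by (rule cSup_least) auto

lemma supnn_nonneg: "bdd_above S \<Longrightarrow> 0 \<le> supnn S"
  unfolding supnn_def by (rule cSup_upper) auto

lemma hoelder_quotient_le_hoelder_semi:
  assumes "\<forall>s\<in>\<Omega>. \<forall>t\<in>\<Omega>. s \<noteq> t \<longrightarrow> p (g s - g t) / dist s t powr a \<le> B"
    and "s \<in> \<Omega>" "t \<in> \<Omega>" "s \<noteq> t"
  shows "p (g s - g t) / dist s t powr a \<le> hoelder_semi p a \<Omega> g"
  unfolding hoelder_semi_def using assms by (intro supnn_upper) (auto intro!: bdd_aboveI)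

lemma Ck_norm_least:
  assumes "0 \<le> M" and "\<And>x. x \<in> \<Omega> \<Longrightarrow> p (f x) \<le> M"
    and "\<And>is s t. length is \<le> intpart k \<Longrightarrow> s \<in> \<Omega> \<Longrightarrow> t \<in> \<Omega> \<Longrightarrow> s \<noteq> t \<Longrightarrow>
      p (iter_partial P is f s - iter_partial P is f t) / dist s t powr fracpart k \<le> M"
  shows "Ck_norm P p k \<Omega> f \<le> M"
  unfolding Ck_norm_def hoelder_semi_def using assms by (intro supnn_least) (auto intro!: supnn_least)

lemma bdd_above_Ck_norm_terms:
  fixes f :: "real^'m \<Rightarrow> 'v::real_vector"
  assumes "Ck P k \<Omega> f" "p \<in> P"
  shows "bdd_above (insert (supnn ((\<lambda>x. p (f x)) ` \<Omega>))
      {hoelder_semi p (fracpart k) \<Omega> (iter_partial P is f) | is. length is \<le> intpart k})"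
proof -
  have "{hoelder_semi p (fracpart k) \<Omega> (iter_partial P is f) | is. length is \<le> intpart k} =
      (\<lambda>is. hoelder_semi p (fracpart k) \<Omega> (iter_partial P is f)) ` {is. set is \<subseteq> UNIV \<and> length is \<le> intpart k}"
    by auto
  moreover have "finite {is :: 'm list. set is \<subseteq> UNIV \<and> length is \<le> intpart k}"
    by (rule finite_lists_length_le) simp
  ultimately show ?thesis by (simp add: bdd_above_finite)
qed

lemma Ck_norm_nonneg: "Ck P k \<Omega> f \<Longrightarrow> p \<in> P \<Longrightarrow> 0 \<le> Ck_norm P p k \<Omega> f"
  unfolding Ck_norm_def by (rule supnn_nonneg[OF bdd_above_Ck_norm_terms])

lemma seminorm_le_Ck_norm:
  assumes f: "Ck P k \<Omega> f" and p: "p \<in> P" and x: "x \<in> \<Omega>"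
  shows "p (f x) \<le> Ck_norm P p k \<Omega> f"
proof -
  obtain B where "\<forall>x\<in>\<Omega>. p (f x) \<le> B" using f p unfolding Ck_def by blast
  then have "bdd_above ((\<lambda>x. p (f x)) ` \<Omega>)" by (intro bdd_aboveI2) auto
  then have "p (f x) \<le> supnn ((\<lambda>x. p (f x)) ` \<Omega>)" using x by (intro supnn_upper) auto
  also have "\<dots> \<le> Ck_norm P p k \<Omega> f"
    unfolding Ck_norm_def by (intro supnn_upper[OF bdd_above_Ck_norm_terms[OF f p]]) simp
  finally show ?thesis .
qed

lemma hoelder_quotient_le_Ck_norm:
  assumes f: "Ck P k \<Omega> f" and p: "p \<in> P" and "length is \<le> intpart k"
    and "s \<in> \<Omega>" "t \<in> \<Omega>" "s \<noteq> t"
  shows "p (iter_partial P is f s - iter_partial P is f t) / dist s t powr fracpart k \<le> Ck_norm P p k \<Omega> f"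
proof -
  obtain B where "\<forall>s\<in>\<Omega>. \<forall>t\<in>\<Omega>. s \<noteq> t \<longrightarrow>
      p (iter_partial P is f s - iter_partial P is f t) / dist s t powr fracpart k \<le> B"
    using f p assms(3) unfolding Ck_def by blast
  then have "p (iter_partial P is f s - iter_partial P is f t) / dist s t powr fracpart k
      \<le> hoelder_semi p (fracpart k) \<Omega> (iter_partial P is f)"
    using assms(4-6) by (rule hoelder_quotient_le_hoelder_semi)
  also have "\<dots> \<le> Ck_norm P p k \<Omega> f"
    unfolding Ck_norm_def using assms(3) by (intro supnn_upper[OF bdd_above_Ck_norm_terms[OF f p]]) auto
  finally show ?thesis .
qed

lemma hoelder_le_Ck_norm:
  assumes f: "Ck P k \<Omega> f" and "p \<in> P" "seminorm p" and "length is \<le> intpart k" "s \<in> \<Omega>" "t \<in> \<Omega>"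
  shows "p (iter_partial P is f s - iter_partial P is f t) \<le> Ck_norm P p k \<Omega> f * dist s t powr fracpart k"
proof (cases "s = t")
  case True
  then show ?thesis using seminorm_zero[OF \<open>seminorm p\<close>] by simp
next
  case False
  then show ?thesis
    using hoelder_quotient_le_Ck_norm[OF assms(1,2,4-6) False] by (simp add: divide_le_eq)
qed

lemma Ck_comp_cont_linear_form_bound:
  fixes f :: "real^'m \<Rightarrow> 'v::real_vector"
  assumes haus: "Hausdorff_space (seminorm_topology P)" and \<Omega>: "open \<Omega>"
    and l: "cont_linear_form P l" and f: "Ck P k \<Omega> f"
    and F: "F \<subseteq> P" and c: "\<And>q. q \<in> F \<Longrightarrow> 0 \<le> c q"
    and bound: "\<And>v. \<bar>l v\<bar> \<le> (\<Sum>q\<in>F. c q * q v)"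
  defines "M \<equiv> \<Sum>q\<in>F. c q * Ck_norm P q k \<Omega> f"
  shows "Ck {abs} k \<Omega> (l \<circ> f)" and "Ck_norm {abs} abs k \<Omega> (l \<circ> f) \<le> M"
proof -
  have lin: "linear l" using l unfolding cont_linear_form_def by simp
  have M: "0 \<le> M"
    unfolding M_def using F c Ck_norm_nonneg[OF f] by (auto intro!: sum_nonneg)
  have scaled: "\<bar>l v\<bar> \<le> w * M" if w: "0 \<le> w" and v: "\<And>q. q \<in> F \<Longrightarrow> q v \<le> w * Ck_norm P q k \<Omega> f"
    for v w
  proof -
    have "\<bar>l v\<bar> \<le> (\<Sum>q\<in>F. c q * (w * Ck_norm P q k \<Omega> f))"
      using c v by (intro order_trans[OF bound[of v]] sum_mono mult_left_mono) auto
    then show ?thesis unfolding M_def by (simp add: sum_distrib_left algebra_simps)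
  qed
  have partials: "partials_exist {abs} \<Omega> is (l \<circ> f) \<and>
      (\<forall>x\<in>\<Omega>. iter_partial {abs} is (l \<circ> f) x = l (iter_partial P is f x))"
    if "length is \<le> intpart k" for "is"
    using f that by (intro iter_partial_comp_cont_linear_form[OF haus \<Omega> l]) (simp add: Ck_def)
  have value_bound: "\<bar>(l \<circ> f) x\<bar> \<le> M" if "x \<in> \<Omega>" for x
    using scaled[of 1 "f x"] seminorm_le_Ck_norm[OF f _ that] F by auto
  have hoelder: "\<bar>iter_partial {abs} is (l \<circ> f) s - iter_partial {abs} is (l \<circ> f) t\<bar> /
      dist s t powr fracpart k \<le> M"
    if "length is \<le> intpart k" "s \<in> \<Omega>" "t \<in> \<Omega>" "s \<noteq> t" for "is" s t
  proof -
    let ?g = "iter_partial P is f"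
    have "q (?g s - ?g t) \<le> dist s t powr fracpart k * Ck_norm P q k \<Omega> f" if "q \<in> F" for q
      using hoelder_quotient_le_Ck_norm[OF f _ \<open>length is \<le> intpart k\<close> \<open>s \<in> \<Omega>\<close> \<open>t \<in> \<Omega>\<close> \<open>s \<noteq> t\<close>, of q]
        that F \<open>s \<noteq> t\<close> by (auto simp: divide_le_eq mult.commute)
    then have "\<bar>l (?g s - ?g t)\<bar> \<le> dist s t powr fracpart k * M" by (intro scaled) auto
    moreover have "iter_partial {abs} is (l \<circ> f) s - iter_partial {abs} is (l \<circ> f) t = l (?g s - ?g t)"
      using partials[OF that(1)] that(2,3) by (simp add: linear_diff[OF lin])
    ultimately show ?thesis using \<open>s \<noteq> t\<close> by (simp add: divide_le_eq mult.commute)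
  qed
  show "Ck {abs} k \<Omega> (l \<circ> f)"
    unfolding Ck_def using value_bound hoelder partials by blast
  show "Ck_norm {abs} abs k \<Omega> (l \<circ> f) \<le> M"
    using M value_bound hoelder by (intro Ck_norm_least) auto
qed

lemma Ck_imp_dual_seminorm_bounds:
  fixes f :: "real^'m \<Rightarrow> 'v::real_vector"
  assumes sn: "\<forall>p\<in>P. seminorm p" and haus: "Hausdorff_space (seminorm_topology P)"
    and \<Omega>: "open \<Omega>" and f: "Ck P k \<Omega> f" and p: "p \<in> P"
  shows "\<exists>C>0. \<forall>l. cont_linear_form P l \<longrightarrow>
    Ck {abs} k \<Omega> (l \<circ> f) \<and> ereal (Ck_norm {abs} abs k \<Omega> (l \<circ> f)) \<le> ereal C * dual_seminorm p l"
proof (intro exI[of _ "Ck_norm P p k \<Omega> f + 1"] conjI allI impI)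
  have N: "0 \<le> Ck_norm P p k \<Omega> f" by (rule Ck_norm_nonneg[OF f p])
  then show "0 < Ck_norm P p k \<Omega> f + 1" by simp
  fix l assume l: "cont_linear_form P l"
  have lin: "linear l" using l unfolding cont_linear_form_def by simp
  obtain F c where "finite F" "F \<subseteq> P" "0 \<le> c" "\<And>v. \<bar>l v\<bar> \<le> c * (\<Sum>q\<in>F. q v)"
    using cont_linear_form_bound[OF sn l] by blast
  then show "Ck {abs} k \<Omega> (l \<circ> f)"
    by (intro Ck_comp_cont_linear_form_bound(1)[OF haus \<Omega> l f, of F "\<lambda>_. c"])
      (simp_all add: sum_distrib_left)
  show "ereal (Ck_norm {abs} abs k \<Omega> (l \<circ> f)) \<le> ereal (Ck_norm P p k \<Omega> f + 1) * dual_seminorm p l"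
  proof (cases "dual_seminorm p l")
    case (real d)
    have d: "0 \<le> d" using dual_seminorm_nonneg[of p l] sn p lin real by simp
    have "Ck_norm {abs} abs k \<Omega> (l \<circ> f) \<le> d * Ck_norm P p k \<Omega> f"
      using abs_le_dual_seminorm[OF _ lin real] sn p d
      by (intro Ck_comp_cont_linear_form_bound(2)[OF haus \<Omega> l f, of "{p}" "\<lambda>_. d", simplified]) auto
    also have "\<dots> \<le> (Ck_norm P p k \<Omega> f + 1) * d" using d by (simp add: algebra_simps)
    finally show ?thesis using real by simp
  next
    case PInf
    then show ?thesis using N by simp
  next
    case MInf
    then show ?thesis using dual_seminorm_nonneg[of p l] sn p lin by simp
  qed
qed

section \<open>Existence of partial derivatives from scalar Hoelder bounds\<close>

lemma limitin_at_0_if_Cauchy: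
  fixes u :: "real \<Rightarrow> 'v::real_vector"
  assumes sn: "\<forall>p\<in>P. seminorm p" and sc: "seq_complete P"
    and cauchy: "\<And>p e. p \<in> P \<Longrightarrow> 0 < e \<Longrightarrow> \<exists>d>0. \<forall>h h'. h \<noteq> 0 \<longrightarrow> h' \<noteq> 0 \<longrightarrow>
      \<bar>h\<bar> < d \<longrightarrow> \<bar>h'\<bar> < d \<longrightarrow> p (u h - u h') < e"
  obtains v where "limitin (seminorm_topology P) u v (at 0)"
proof -
  define hs where "hs n = inverse (real (Suc n))" for n
  have hs0: "hs n \<noteq> 0" for n unfolding hs_def by simp
  have small: "eventually (\<lambda>n. \<bar>hs n\<bar> < d) sequentially" if "0 < d" for d
    using order_tendstoD(2)[OF tendsto_rabs_zero[OF LIMSEQ_inverse_real_of_nat] that]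
    unfolding hs_def .
  have "\<forall>p\<in>P. \<forall>e>0. \<exists>N. \<forall>m\<ge>N. \<forall>n\<ge>N. p (u (hs m) - u (hs n)) < e"
  proof (intro ballI allI impI)
    fix p and e :: real assume p: "p \<in> P" and e: "0 < e"
    obtain d where "d > 0" and d: "\<forall>h h'. h \<noteq> 0 \<longrightarrow> h' \<noteq> 0 \<longrightarrow> \<bar>h\<bar> < d \<longrightarrow> \<bar>h'\<bar> < d \<longrightarrow>
        p (u h - u h') < e"
      using cauchy[OF p e] by blast
    obtain N where "\<And>n. N \<le> n \<Longrightarrow> \<bar>hs n\<bar> < d"
      using small[OF \<open>d > 0\<close>] unfolding eventually_sequentially by blast
    then show "\<exists>N. \<forall>m\<ge>N. \<forall>n\<ge>N. p (u (hs m) - u (hs n)) < e" using d hs0 by blast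
  qed
  then have "\<exists>v. limitin (seminorm_topology P) (\<lambda>n. u (hs n)) v sequentially"
    using sc[unfolded seq_complete_def, THEN spec[of _ "\<lambda>n. u (hs n)"]] by blast
  then obtain v where v: "limitin (seminorm_topology P) (\<lambda>n. u (hs n)) v sequentially" ..
  have "limitin (seminorm_topology P) u v (at 0)"
    unfolding limitin_seminorm_topology[OF sn]
  proof (intro ballI allI impI)
    fix p and e :: real assume p: "p \<in> P" and e: "0 < e"
    obtain d where "d > 0" and d: "\<forall>h h'. h \<noteq> 0 \<longrightarrow> h' \<noteq> 0 \<longrightarrow> \<bar>h\<bar> < d \<longrightarrow> \<bar>h'\<bar> < d \<longrightarrow>
        p (u h - u h') < e / 2"
      using cauchy[OF p, of "e / 2"] e by auto
    have "eventually (\<lambda>n. p (u (hs n) - v) < e / 2) sequentially"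
      using v e p unfolding limitin_seminorm_topology[OF sn] by (meson half_gt_zero)
    then have "eventually (\<lambda>n. \<bar>hs n\<bar> < d \<and> p (u (hs n) - v) < e / 2) sequentially"
      using small[OF \<open>d > 0\<close>] by (rule eventually_conj[rotated])
    then obtain n where n: "\<bar>hs n\<bar> < d" "p (u (hs n) - v) < e / 2"
      by (auto simp: eventually_sequentially)
    have "p (u h - v) < e" if "h \<noteq> 0" "\<bar>h\<bar> < d" for h
    proof -
      have "p (u h - u (hs n)) < e / 2" using d that n(1) hs0 by blast
      then show ?thesis using seminorm_diff_triangle[of p "u h" v "u (hs n)"] sn p n(2) by fastforce
    qed
    then show "eventually (\<lambda>h. p (u h - v) < e) (at 0)"
      unfolding eventually_at using \<open>d > 0\<close> by (auto simp: dist_real_def)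
  qed
  then show thesis by (rule that)
qed

lemma difference_quotient_hoelder:
  fixes \<phi> \<psi> :: "real \<Rightarrow> real"
  assumes deriv: "\<And>t. \<bar>t\<bar> < \<delta> \<Longrightarrow> (\<phi> has_real_derivative \<psi> t) (at t)"
    and hoelder: "\<And>t. \<bar>t\<bar> < \<delta> \<Longrightarrow> \<bar>\<psi> t - \<psi> 0\<bar> \<le> K * \<bar>t\<bar> powr a"
    and "0 \<le> a" "h \<noteq> 0" "\<bar>h\<bar> < \<delta>"
  shows "\<bar>(\<phi> h - \<phi> 0) / h - \<psi> 0\<bar> \<le> K * \<bar>h\<bar> powr a"
proof -
  have "0 \<le> K * \<bar>h\<bar> powr a" using hoelder[OF assms(5)] by linarith
  then have K: "0 \<le> K" using assms(4) by (simp add: zero_le_mult_iff)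
  have "\<exists>z. \<bar>z\<bar> < \<bar>h\<bar> \<and> (\<phi> h - \<phi> 0) / h = \<psi> z"
  proof (cases "0 < h")
    case True
    have "\<bar>t\<bar> < \<delta>" if "0 \<le> t" "t \<le> h" for t using that assms(5) by simp
    then obtain z where "0 < z" "z < h" "\<phi> h - \<phi> 0 = (h - 0) * \<psi> z"
      using MVT2[OF True deriv] by blast
    then show ?thesis by (intro exI[of _ z]) auto
  next
    case False
    then have "h < 0" using assms(4) by simp
    have "\<bar>t\<bar> < \<delta>" if "h \<le> t" "t \<le> 0" for t using that assms(5) by simp
    then obtain z where "h < z" "z < 0" "\<phi> 0 - \<phi> h = (0 - h) * \<psi> z"
      using MVT2[OF \<open>h < 0\<close> deriv] by blast
    then show ?thesis using \<open>h < 0\<close> by (intro exI[of _ z]) (auto simp: field_simps)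
  qed
  then obtain z where z: "\<bar>z\<bar> < \<bar>h\<bar>" "(\<phi> h - \<phi> 0) / h = \<psi> z" by blast
  have "\<bar>\<psi> z - \<psi> 0\<bar> \<le> K * \<bar>z\<bar> powr a" using hoelder z(1) assms(5) by simp
  also have "\<dots> \<le> K * \<bar>h\<bar> powr a" using z(1) assms(3) K by (intro mult_left_mono powr_mono2) auto
  finally show ?thesis using z(2) by simp
qed

lemma diff_quot_partial_hoelder:
  fixes G :: "real^'m \<Rightarrow> real"
  assumes ball: "ball x \<delta> \<subseteq> \<Omega>"
    and partial: "\<And>y. y \<in> \<Omega> \<Longrightarrow> has_partial_at {abs} G i y"
    and hoelder: "\<And>s t. s \<in> \<Omega> \<Longrightarrow> t \<in> \<Omega> \<Longrightarrow>
      \<bar>partial {abs} i G s - partial {abs} i G t\<bar> \<le> C * dist s t powr a"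
    and "0 \<le> a" "h \<noteq> 0" "\<bar>h\<bar> < \<delta>"
  shows "\<bar>diff_quot G i x h - partial {abs} i G x\<bar> \<le> C * \<bar>h\<bar> powr a"
proof -
  define e where "e = axis i (1::real)"
  define \<phi> where "\<phi> t = G (x + t *\<^sub>R e)" for t
  define \<psi> where "\<psi> t = partial {abs} i G (x + t *\<^sub>R e)" for t
  have on_line: "x + t *\<^sub>R e \<in> \<Omega>" if "\<bar>t\<bar> < \<delta>" for t
    using ball that by (auto simp: e_def dist_norm)
  have dq: "diff_quot G i (x + t *\<^sub>R e) = (\<lambda>h. (\<phi> (t + h) - \<phi> t) / h)" for t
    by (simp add: fun_eq_iff diff_quot_def \<phi>_def e_def algebra_simps divide_inverse)
  have "(\<phi> has_real_derivative \<psi> t) (at t)" if "\<bar>t\<bar> < \<delta>" for t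
    using has_partial_at_abs_tendsto[OF partial[OF on_line[OF that]]]
    unfolding DERIV_def dq \<psi>_def .
  moreover have "\<bar>\<psi> t - \<psi> 0\<bar> \<le> C * \<bar>t\<bar> powr a" if "\<bar>t\<bar> < \<delta>" for t
    using hoelder[OF on_line[OF that] on_line[of 0]] assms(6) unfolding \<psi>_def
    by (simp add: dist_norm e_def)
  ultimately have "\<bar>(\<phi> h - \<phi> 0) / h - \<psi> 0\<bar> \<le> C * \<bar>h\<bar> powr a"
    using assms(4-6) by (rule difference_quotient_hoelder)
  then show ?thesis using dq[of 0] by (simp add: \<psi>_def)
qed

lemma seminorm_diff_quot_diff_le:
  fixes g :: "real^'m \<Rightarrow> 'v::real_vector"
  assumes sn: "\<forall>p\<in>P. seminorm p" and p: "p \<in> P" and ball: "ball x \<delta> \<subseteq> \<Omega>" and a: "0 < a"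
    and weak: "\<And>l. cont_linear_form P l \<Longrightarrow> dual_seminorm p l \<le> 1 \<Longrightarrow>
      (\<forall>y\<in>\<Omega>. has_partial_at {abs} (l \<circ> g) i y) \<and>
      (\<forall>s\<in>\<Omega>. \<forall>t\<in>\<Omega>. \<bar>partial {abs} i (l \<circ> g) s - partial {abs} i (l \<circ> g) t\<bar> \<le> C * dist s t powr a)"
    and h: "h \<noteq> 0" "\<bar>h\<bar> < \<delta>" and h': "h' \<noteq> 0" "\<bar>h'\<bar> < \<delta>"
  shows "p (diff_quot g i x h - diff_quot g i x h') \<le> C * \<bar>h\<bar> powr a + C * \<bar>h'\<bar> powr a"
proof (rule seminorm_le_if_dual_bounded[OF sn p])
  fix l assume l: "cont_linear_form P l" and "dual_seminorm p l \<le> 1"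
  then have near: "\<bar>diff_quot (l \<circ> g) i x k - partial {abs} i (l \<circ> g) x\<bar> \<le> C * \<bar>k\<bar> powr a"
    if "k \<noteq> 0" "\<bar>k\<bar> < \<delta>" for k
    using weak that a by (intro diff_quot_partial_hoelder[OF ball]) auto
  have "l (diff_quot g i x h - diff_quot g i x h') = diff_quot (l \<circ> g) i x h - diff_quot (l \<circ> g) i x h'"
    using l unfolding cont_linear_form_def by (simp add: diff_quot_comp_linear linear_diff)
  then show "l (diff_quot g i x h - diff_quot g i x h') \<le> C * \<bar>h\<bar> powr a + C * \<bar>h'\<bar> powr a"
    using near[OF h] near[OF h'] by linarith
qed

lemma has_partial_at_if_weakly_hoelder:
  fixes g :: "real^'m \<Rightarrow> 'v::real_vector"
  assumes sn: "\<forall>p\<in>P. seminorm p" and sc: "seq_complete P" and \<Omega>: "open \<Omega>" and x: "x \<in> \<Omega>"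
    and a: "0 < a"
    and weak: "\<And>p. p \<in> P \<Longrightarrow> \<exists>C. \<forall>l. cont_linear_form P l \<longrightarrow> dual_seminorm p l \<le> 1 \<longrightarrow>
      (\<forall>y\<in>\<Omega>. has_partial_at {abs} (l \<circ> g) i y) \<and>
      (\<forall>s\<in>\<Omega>. \<forall>t\<in>\<Omega>. \<bar>partial {abs} i (l \<circ> g) s - partial {abs} i (l \<circ> g) t\<bar> \<le> C * dist s t powr a)"
  shows "has_partial_at P g i x"
proof -
  obtain \<delta> where "0 < \<delta>" and ball: "ball x \<delta> \<subseteq> \<Omega>" using \<Omega> x open_contains_ball by blast
  have "\<exists>d>0. \<forall>h h'. h \<noteq> 0 \<longrightarrow> h' \<noteq> 0 \<longrightarrow> \<bar>h\<bar> < d \<longrightarrow> \<bar>h'\<bar> < d \<longrightarrow>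
      p (diff_quot g i x h - diff_quot g i x h') < e"
    if p: "p \<in> P" and e: "0 < e" for p e
  proof -
    obtain C where C: "\<forall>l. cont_linear_form P l \<longrightarrow> dual_seminorm p l \<le> 1 \<longrightarrow>
      (\<forall>y\<in>\<Omega>. has_partial_at {abs} (l \<circ> g) i y) \<and>
      (\<forall>s\<in>\<Omega>. \<forall>t\<in>\<Omega>. \<bar>partial {abs} i (l \<circ> g) s - partial {abs} i (l \<circ> g) t\<bar> \<le> C * dist s t powr a)"
      using weak[OF p] by blast
    have "((\<lambda>h::real. C * \<bar>h\<bar> powr a) \<longlongrightarrow> 0) (at 0)"
      using a by (intro tendsto_mult_right_zero tendsto_zero_powrI tendsto_rabs_zero tendsto_ident_at) auto
    then have "eventually (\<lambda>h. C * \<bar>h\<bar> powr a < e / 2) (at (0::real))"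
      using e by (intro order_tendstoD(2)) auto
    then obtain d0 where "0 < d0" and d0: "\<And>h. h \<noteq> 0 \<Longrightarrow> dist h 0 < d0 \<Longrightarrow> C * \<bar>h\<bar> powr a < e / 2"
      unfolding eventually_at by blast
    show ?thesis
    proof (intro exI[of _ "min \<delta> d0"] conjI allI impI)
      show "0 < min \<delta> d0" using \<open>0 < \<delta>\<close> \<open>0 < d0\<close> by simp
      fix h h' :: real assume "h \<noteq> 0" "h' \<noteq> 0" "\<bar>h\<bar> < min \<delta> d0" "\<bar>h'\<bar> < min \<delta> d0"
      then show "p (diff_quot g i x h - diff_quot g i x h') < e"
        using seminorm_diff_quot_diff_le[OF sn p ball a, of g i C h h'] C d0[of h] d0[of h']
        by (simp add: dist_real_def)
    qed
  qed
  then obtain v where "limitin (seminorm_topology P) (diff_quot g i x) v (at 0)"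
    using limitin_at_0_if_Cauchy[OF sn sc] by blast
  then show ?thesis unfolding has_partial_at_def by blast
qed

definition weakly_Ck ::
  "('v::real_vector \<Rightarrow> real) set \<Rightarrow> real \<Rightarrow> (real^'m) set \<Rightarrow> (real^'m \<Rightarrow> 'v) \<Rightarrow> bool" where
  "weakly_Ck P k \<Omega> f \<longleftrightarrow> (\<forall>p\<in>P. \<exists>C. \<forall>l. cont_linear_form P l \<longrightarrow> dual_seminorm p l \<le> 1 \<longrightarrow>
     Ck {abs} k \<Omega> (l \<circ> f) \<and> Ck_norm {abs} abs k \<Omega> (l \<circ> f) \<le> C)"

lemma partial_comp_iter_partial:
  fixes f :: "real^'m \<Rightarrow> 'v::real_vector"
  assumes haus: "Hausdorff_space (seminorm_topology P)" and \<Omega>: "open \<Omega>"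
    and l: "cont_linear_form P l" and lf: "Ck {abs} k \<Omega> (l \<circ> f)"
    and f: "partials_exist P \<Omega> is f" and len: "length (i # is) \<le> intpart k" and y: "y \<in> \<Omega>"
  shows "has_partial_at {abs} (l \<circ> iter_partial P is f) i y"
    and "partial {abs} i (l \<circ> iter_partial P is f) y = iter_partial {abs} (i # is) (l \<circ> f) y"
proof -
  have eq: "\<forall>y\<in>\<Omega>. iter_partial {abs} is (l \<circ> f) y = (l \<circ> iter_partial P is f) y"
    using iter_partial_comp_cont_linear_form[OF haus \<Omega> l f] by simp
  have "partials_exist {abs} \<Omega> (i # is) (l \<circ> f)" using lf len unfolding Ck_def by blast
  then have "has_partial_at {abs} (iter_partial {abs} is (l \<circ> f)) i y" using y by simp
  then show "has_partial_at {abs} (l \<circ> iter_partial P is f) i y"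
    using has_partial_at_cong[OF \<Omega> y eq] by (simp add: comp_def)
  show "partial {abs} i (l \<circ> iter_partial P is f) y = iter_partial {abs} (i # is) (l \<circ> f) y"
    using partial_cong[OF \<Omega> y eq] by (simp add: comp_def)
qed

lemma partials_exist_if_weakly_Ck:
  fixes f :: "real^'m \<Rightarrow> 'v::real_vector"
  assumes sn: "\<forall>p\<in>P. seminorm p" and haus: "Hausdorff_space (seminorm_topology P)"
    and sc: "seq_complete P" and \<Omega>: "open \<Omega>" and a: "0 < fracpart k"
    and weak: "weakly_Ck P k \<Omega> f"
  shows "length is \<le> intpart k \<Longrightarrow> partials_exist P \<Omega> is f"
proof (induction "is")
  case (Cons i "is")
  then have f: "partials_exist P \<Omega> is f" by simp
  let ?g = "iter_partial P is f"
  have "\<exists>C. \<forall>l. cont_linear_form P l \<longrightarrow> dual_seminorm p l \<le> 1 \<longrightarrow>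
      (\<forall>y\<in>\<Omega>. has_partial_at {abs} (l \<circ> ?g) i y) \<and>
      (\<forall>s\<in>\<Omega>. \<forall>t\<in>\<Omega>. \<bar>partial {abs} i (l \<circ> ?g) s - partial {abs} i (l \<circ> ?g) t\<bar>
        \<le> C * dist s t powr fracpart k)"
    if "p \<in> P" for p
  proof -
    obtain C where C: "\<And>l. cont_linear_form P l \<Longrightarrow> dual_seminorm p l \<le> 1 \<Longrightarrow>
        Ck {abs} k \<Omega> (l \<circ> f) \<and> Ck_norm {abs} abs k \<Omega> (l \<circ> f) \<le> C"
      using weak \<open>p \<in> P\<close> unfolding weakly_Ck_def by blast
    have "\<bar>partial {abs} i (l \<circ> ?g) s - partial {abs} i (l \<circ> ?g) t\<bar> \<le> C * dist s t powr fracpart k"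
      if l: "cont_linear_form P l" "dual_seminorm p l \<le> 1" and "s \<in> \<Omega>" "t \<in> \<Omega>" for l s t
    proof -
      have lf: "Ck {abs} k \<Omega> (l \<circ> f)" and norm: "Ck_norm {abs} abs k \<Omega> (l \<circ> f) \<le> C"
        using C[OF l] by auto
      have "\<bar>iter_partial {abs} (i # is) (l \<circ> f) s - iter_partial {abs} (i # is) (l \<circ> f) t\<bar>
          \<le> Ck_norm {abs} abs k \<Omega> (l \<circ> f) * dist s t powr fracpart k"
        using hoelder_le_Ck_norm[OF lf singletonI seminorm_abs Cons.prems \<open>s \<in> \<Omega>\<close> \<open>t \<in> \<Omega>\<close>] .
      also have "\<dots> \<le> C * dist s t powr fracpart k" using norm by (simp add: mult_right_mono)
      finally
      show ?thesis
        using partial_comp_iter_partial(2)[OF haus \<Omega> l(1) lf f Cons.prems] \<open>s \<in> \<Omega>\<close> \<open>t \<in> \<Omega>\<close> by simp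
    qed
    then show ?thesis
      using partial_comp_iter_partial(1)[OF haus \<Omega> _ _ f Cons.prems] C by blast
  qed
  then have "\<forall>x\<in>\<Omega>. has_partial_at P ?g i x"
    using has_partial_at_if_weakly_hoelder[OF sn sc \<Omega> _ a] by blast
  then show ?case using f by simp
qed simp

lemma weakly_Ck_imp_Ck:
  fixes f :: "real^'m \<Rightarrow> 'v::real_vector"
  assumes sn: "\<forall>p\<in>P. seminorm p" and haus: "Hausdorff_space (seminorm_topology P)"
    and sc: "seq_complete P" and \<Omega>: "open \<Omega>" and a: "0 < fracpart k"
    and weak: "weakly_Ck P k \<Omega> f"
  shows "Ck P k \<Omega> f"
proof -
  have partials: "partials_exist P \<Omega> is f" if "length is \<le> intpart k" for "is"
    using partials_exist_if_weakly_Ck[OF sn haus sc \<Omega> a weak that] .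
  have "(\<exists>B. \<forall>x\<in>\<Omega>. p (f x) \<le> B) \<and> (\<forall>is. length is \<le> intpart k \<longrightarrow> (\<exists>B. \<forall>s\<in>\<Omega>. \<forall>t\<in>\<Omega>. s \<noteq> t \<longrightarrow>
      p (iter_partial P is f s - iter_partial P is f t) / dist s t powr fracpart k \<le> B))"
    if p: "p \<in> P" for p
  proof -
    obtain C where C: "\<And>l. cont_linear_form P l \<Longrightarrow> dual_seminorm p l \<le> 1 \<Longrightarrow>
        Ck {abs} k \<Omega> (l \<circ> f) \<and> Ck_norm {abs} abs k \<Omega> (l \<circ> f) \<le> C"
      using weak p unfolding weakly_Ck_def by blast
    have "p (f x) \<le> C" if "x \<in> \<Omega>" for x
    proof (rule seminorm_le_if_dual_bounded[OF sn p])
      fix l assume "cont_linear_form P l" "dual_seminorm p l \<le> 1"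
      then show "l (f x) \<le> C"
        using C seminorm_le_Ck_norm[of "{abs}" k \<Omega> "l \<circ> f" abs x] \<open>x \<in> \<Omega>\<close> by fastforce
    qed
    moreover have "p (iter_partial P is f s - iter_partial P is f t) / dist s t powr fracpart k \<le> C"
      if "length is \<le> intpart k" "s \<in> \<Omega>" "t \<in> \<Omega>" "s \<noteq> t" for "is" s t
    proof -
      have "p (iter_partial P is f s - iter_partial P is f t) \<le> C * dist s t powr fracpart k"
      proof (rule seminorm_le_if_dual_bounded[OF sn p])
        fix l assume l: "cont_linear_form P l" and "dual_seminorm p l \<le> 1"
        then have lf: "Ck {abs} k \<Omega> (l \<circ> f)" and norm: "Ck_norm {abs} abs k \<Omega> (l \<circ> f) \<le> C"
          using C by auto
        have "l (iter_partial P is f s - iter_partial P is f t) =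
            iter_partial {abs} is (l \<circ> f) s - iter_partial {abs} is (l \<circ> f) t"
          using iter_partial_comp_cont_linear_form[OF haus \<Omega> l partials[OF that(1)]] that(2,3) l
          by (simp add: cont_linear_form_def linear_diff)
        also have "\<dots> \<le> Ck_norm {abs} abs k \<Omega> (l \<circ> f) * dist s t powr fracpart k"
          using hoelder_le_Ck_norm[OF lf singletonI seminorm_abs that(1-3)] by simp
        also have "\<dots> \<le> C * dist s t powr fracpart k"
          using norm by (simp add: mult_right_mono)
        finally show "l (iter_partial P is f s - iter_partial P is f t) \<le> C * dist s t powr fracpart k" .
      qed
      then show ?thesis using \<open>s \<noteq> t\<close> by (simp add: divide_le_eq)
    qed
    ultimately show ?thesis by blast
  qed
  then show ?thesis unfolding Ck_def using partials by blast
qed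

lemma weakly_Ck_if_dual_seminorm_bounds:
  assumes sn: "\<forall>p\<in>P. seminorm p"
    and bounds: "\<forall>p\<in>P. \<exists>C>0. \<forall>l. cont_linear_form P l \<longrightarrow>
      Ck {abs} k \<Omega> (l \<circ> f) \<and> ereal (Ck_norm {abs} abs k \<Omega> (l \<circ> f)) \<le> ereal C * dual_seminorm p l"
  shows "weakly_Ck P k \<Omega> f"
  unfolding weakly_Ck_def
proof
  fix p assume p: "p \<in> P"
  then obtain C where "0 < C" and C: "\<And>l. cont_linear_form P l \<Longrightarrow>
      Ck {abs} k \<Omega> (l \<circ> f) \<and> ereal (Ck_norm {abs} abs k \<Omega> (l \<circ> f)) \<le> ereal C * dual_seminorm p l"
    using bounds by blast
  have "Ck_norm {abs} abs k \<Omega> (l \<circ> f) \<le> C"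
    if l: "cont_linear_form P l" and "dual_seminorm p l \<le> 1" for l
  proof -
    have "ereal (Ck_norm {abs} abs k \<Omega> (l \<circ> f)) \<le> ereal C * dual_seminorm p l" using C[OF l] by blast
    also have "\<dots> \<le> ereal C * 1"
      using \<open>0 < C\<close> \<open>dual_seminorm p l \<le> 1\<close> by (intro ereal_mult_left_mono) auto
    finally show ?thesis by simp
  qed
  then show "\<exists>C. \<forall>l. cont_linear_form P l \<longrightarrow> dual_seminorm p l \<le> 1 \<longrightarrow>
      Ck {abs} k \<Omega> (l \<circ> f) \<and> Ck_norm {abs} abs k \<Omega> (l \<circ> f) \<le> C"
    using C by blast
qed

lemma fracpart_pos:
  assumes "0 < k" "k \<notin> \<nat>"
  shows "0 < fracpart k"
proof -
  have "k \<noteq> real (nat \<lfloor>k\<rfloor>)" using assms(2) of_nat_in_Nats by metis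
  then have "k \<noteq> of_int \<lfloor>k\<rfloor>" using assms(1) by simp
  then show ?thesis unfolding fracpart_def by (simp add: of_int_floor_le order.strict_iff_order)
qed

theorem lemma2p1:
  fixes P :: "('v::real_vector \<Rightarrow> real) set"
    and \<Omega> :: "(real^'m) set" and k :: real and f :: "real^'m \<Rightarrow> 'v"
  assumes "\<forall>p\<in>P. seminorm p"
    and "Hausdorff_space (seminorm_topology P)"
    and "seq_complete P"
    and "open \<Omega>"
    and "k > 0" and "k \<notin> \<nat>"
  shows "Ck P k \<Omega> f \<longleftrightarrow>
    (\<forall>p\<in>P. \<exists>C>0. \<forall>l. cont_linear_form P l \<longrightarrow>
        Ck {abs} k \<Omega> (l \<circ> f) \<and>
        ereal (Ck_norm {abs} abs k \<Omega> (l \<circ> f)) \<le> ereal C * dual_seminorm p l)"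
proof
  assume "Ck P k \<Omega> f"
  then show "\<forall>p\<in>P. \<exists>C>0. \<forall>l. cont_linear_form P l \<longrightarrow>
      Ck {abs} k \<Omega> (l \<circ> f) \<and> ereal (Ck_norm {abs} abs k \<Omega> (l \<circ> f)) \<le> ereal C * dual_seminorm p l"
    using Ck_imp_dual_seminorm_bounds[OF assms(1,2,4)] by blast
next
  assume "\<forall>p\<in>P. \<exists>C>0. \<forall>l. cont_linear_form P l \<longrightarrow>
      Ck {abs} k \<Omega> (l \<circ> f) \<and> ereal (Ck_norm {abs} abs k \<Omega> (l \<circ> f)) \<le> ereal C * dual_seminorm p l"
  then have "weakly_Ck P k \<Omega> f" by (rule weakly_Ck_if_dual_seminorm_bounds[OF assms(1)])
  then show "Ck P k \<Omega> f" by (rule weakly_Ck_imp_Ck[OF assms(1-4) fracpart_pos[OF assms(5,6)]])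
qed

end
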